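(* Let $r\in\mathbb Z_n$, $1\le j\le\frac{n-1}2$, let $\mathbf w\ne0$ be a row vector with $\mathbf wZ=q^{2r}\mathbf w$, and write $\mathcal U_k=\mathcal U_k(q^j+q^{-j})$, $\mathcal L_k=\mathcal L_k(q^j+q^{-j})$. Set $\mathbf y_0=\mathbf w$, $\mathbf y_1=q^r\mathcal U_1\mathbf w+\mathbf w$, and $\mathbf y_k=q^{kr}(\mathcal U_k-\mathcal U_{k-2})\mathbf w+k\,q^{(k-1)r}\mathcal U_{k-1}\mathbf w$ for $2\le k\le n-1$. Then $\mathbf y_{j,r}=[\mathbf y_{n-1}\ \cdots\ \mathbf y_1\ \mathbf y_0]$ satisfies $$\mathbf y_{j,r}M=\lambda_{j,r}\mathbf y_{j,r}+\mathbf w_{j,r},\qquad \mathbf w_{j,r}=[q^{(n-1)r}\mathcal L_{n-1}\mathbf w\ \cdots\ q^r\mathcal L_1\mathbf w\ \ \mathbf w],$$ where $\lambda_{j,r}=q^r(q^j+q^{-j})$ and $\mathbf w_{j,r}$ is a left eigenvector of $M$ for $\lambda_{j,r}$.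
   Context: $n\ge3$ odd, $q$ a primitive $n$-th root of unity in $\mathbb C$. $I$ is the $n\times n$ identity, $Z$ the $n\times n$ cyclic permutation matrix with $(Zu)_i=u_{i+1}$ (indices mod $n$). $M$ is the $n^2\times n^2$ block matrix of $n\times n$ blocks $M_{ab}$ ($0\le a,b\le n-1$) with $M_{a,a+1}=I$ ($0\le a\le n-2$), $M_{a,a-1}=Z$ ($1\le a\le n-2$), $M_{n-1,0}=2I$, $M_{n-1,n-2}=2Z$, other blocks zero; row vectors of length $n^2$ are written as $n$ blocks matching this structure. $\mathcal U_k$: $\mathcal U_0=1$, $\mathcal U_1=t$, $\mathcal U_k=t\mathcal U_{k-1}-\mathcal U_{k-2}$. $\mathcal L_k$: $\mathcal L_0=2$, $\mathcal L_1=t$, $\mathcal L_k=t\mathcal L_{k-1}-\mathcal L_{k-2}$. *)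

theory Defs
  imports "HOL-Analysis.Analysis"
begin

(* Vectors of length N are functions nat => complex (only indices < N matter);
   matrices N x N are functions nat => nat => complex. *)

definition primitive_root :: "nat \<Rightarrow> complex \<Rightarrow> bool" where
  "primitive_root n q \<longleftrightarrow> q ^ n = 1 \<and> (\<forall>k. 0 < k \<and> k < n \<longrightarrow> q ^ k \<noteq> 1)"

definition rowmul :: "nat \<Rightarrow> (nat \<Rightarrow> complex) \<Rightarrow> (nat \<Rightarrow> nat \<Rightarrow> complex) \<Rightarrow> nat \<Rightarrow> complex" where
  "rowmul N v A = (\<lambda>c. \<Sum>r<N. v r * A r c)"

definition Imat :: "nat \<Rightarrow> nat \<Rightarrow> complex" where
  "Imat i k = (if i = k then 1 else 0)"

definition Zmat :: "nat \<Rightarrow> nat \<Rightarrow> nat \<Rightarrow> complex" where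
  "Zmat n i k = (if k = (i + 1) mod n then 1 else 0)"

definition Mblock :: "nat \<Rightarrow> nat \<Rightarrow> nat \<Rightarrow> nat \<Rightarrow> nat \<Rightarrow> complex" where
  "Mblock n a b i k =
     (if a \<le> n - 2 \<and> b = a + 1 then Imat i k
      else if 1 \<le> a \<and> a \<le> n - 2 \<and> b + 1 = a then Zmat n i k
      else if a = n - 1 \<and> b = 0 then 2 * Imat i k
      else if a = n - 1 \<and> b = n - 2 then 2 * Zmat n i k
      else 0)"

definition Mmat :: "nat \<Rightarrow> nat \<Rightarrow> nat \<Rightarrow> complex" where
  "Mmat n p s = Mblock n (p div n) (s div n) (p mod n) (s mod n)"

fun chebU :: "complex \<Rightarrow> nat \<Rightarrow> complex" where
  "chebU t 0 = 1"
| "chebU t (Suc 0) = t"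
| "chebU t (Suc (Suc k)) = t * chebU t (Suc k) - chebU t k"

fun chebL :: "complex \<Rightarrow> nat \<Rightarrow> complex" where
  "chebL t 0 = 2"
| "chebL t (Suc 0) = t"
| "chebL t (Suc (Suc k)) = t * chebL t (Suc k) - chebL t k"

definition yblock :: "complex \<Rightarrow> nat \<Rightarrow> nat \<Rightarrow> (nat \<Rightarrow> complex) \<Rightarrow> nat \<Rightarrow> nat \<Rightarrow> complex" where
  "yblock q j r w k =
     (let t = q ^ j + inverse (q ^ j) in
      if k = 0 then w
      else if k = 1 then (\<lambda>i. q ^ r * chebU t 1 * w i + w i)
      else (\<lambda>i. q ^ (k * r) * (chebU t k - chebU t (k - 2)) * w i
                + of_nat k * q ^ ((k - 1) * r) * chebU t (k - 1) * w i))"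

(* y_{j,r} = [y_{n-1} ... y_1 y_0]: block a is y_{n-1-a} *)
definition yvec :: "nat \<Rightarrow> complex \<Rightarrow> nat \<Rightarrow> nat \<Rightarrow> (nat \<Rightarrow> complex) \<Rightarrow> nat \<Rightarrow> complex" where
  "yvec n q j r w p = yblock q j r w (n - 1 - p div n) (p mod n)"

definition wvec :: "nat \<Rightarrow> complex \<Rightarrow> nat \<Rightarrow> nat \<Rightarrow> (nat \<Rightarrow> complex) \<Rightarrow> nat \<Rightarrow> complex" where
  "wvec n q j r w p =
     (let a = p div n; i = p mod n; k = n - 1 - a; t = q ^ j + inverse (q ^ j) in
      if a = n - 1 then w i else q ^ (k * r) * chebL t k * w i)"

definition lam :: "complex \<Rightarrow> nat \<Rightarrow> nat \<Rightarrow> complex" where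
  "lam q j r = q ^ r * (q ^ j + inverse (q ^ j))"

end

theory Submission
  imports Defs
begin

text \<open>
  Every block of y_{j,r} and w_{j,r} is a scalar multiple of w. Since w Z = q^{2r} w, multiplying
  such a block vector by M acts only on the scalar coefficients g_k of the blocks y_k: the
  coefficient of w in block n-1-k of the product is g_{k+1} + q^{2r} g_{k-1}, with doubled boundary
  terms coming from the blocks 2I and 2Z of M. Both eigen-equations thus reduce to a three-term
  recurrence for the coefficients, which follows from the Chebyshev recurrences and
  L_k = U_k - U_{k-2}. At the boundary one needs L_n = 2 and U_{n-1} = 0, which hold because
  t = x + 1/x with x = q^j an n-th root of unity and x^2 \<noteq> 1.
\<close>

lemma chebL_eq_chebU_diff: "chebL t (Suc (Suc k)) = chebU t (Suc (Suc k)) - chebU t k"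
proof (induction t k rule: chebU.induct)
  case (3 t k)
  have "chebL t (Suc (Suc (Suc (Suc k)))) = t * chebL t (Suc (Suc (Suc k))) - chebL t (Suc (Suc k))"
    by (rule chebL.simps(3))
  also have "\<dots> = t * (chebU t (Suc (Suc (Suc k))) - chebU t (Suc k)) - (chebU t (Suc (Suc k)) - chebU t k)"
    by (simp only: 3)
  finally show ?case by (simp add: algebra_simps)
qed (auto simp: algebra_simps)

lemma chebL_Suc_eq_chebU: "chebL t (Suc k) = 2 * chebU t (Suc k) - t * chebU t k"
proof (cases k)
  case (Suc m)
  then show ?thesis using chebL_eq_chebU_diff[of t m] by (simp add: algebra_simps)
qed simp

lemma chebL_closed_form:
  assumes "x * y = 1"
  shows "chebL (x + y) k = x ^ k + y ^ k"
proof (induction "x + y" k rule: chebL.induct)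
  case (3 k)
  have "chebL (x + y) (Suc (Suc k)) = (x + y) * (x ^ Suc k + y ^ Suc k) - (x ^ k + y ^ k)"
    using 3 by simp
  also have "\<dots> = x ^ Suc (Suc k) + y ^ Suc (Suc k) + (x * y - 1) * (x ^ k + y ^ k)"
    by (simp add: algebra_simps)
  finally show ?case using assms by simp
qed auto

lemma chebU_closed_form:
  assumes "x * y = 1"
  shows "chebU (x + y) k * (x - y) = x ^ Suc k - y ^ Suc k"
proof (induction "x + y" k rule: chebU.induct)
  case (3 k)
  have "chebU (x + y) (Suc (Suc k)) * (x - y)
        = (x + y) * (chebU (x + y) (Suc k) * (x - y)) - chebU (x + y) k * (x - y)"
    by (simp add: algebra_simps)
  also have "\<dots> = (x + y) * (x ^ Suc (Suc k) - y ^ Suc (Suc k)) - (x ^ Suc k - y ^ Suc k)"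
    by (simp only: 3)
  also have "\<dots> = x ^ Suc (Suc (Suc k)) - y ^ Suc (Suc (Suc k)) + (x * y - 1) * (x ^ Suc k - y ^ Suc k)"
    by (simp add: algebra_simps)
  finally show ?case using assms by simp
qed (auto simp: algebra_simps power2_eq_square)

lemma cheb_at_root_of_unity:
  fixes x :: complex
  assumes "x ^ n = 1" and "x ^ 2 \<noteq> 1" and "n \<ge> 1"
  shows "chebL (x + inverse x) n = 2" and "chebU (x + inverse x) (n - 1) = 0"
proof -
  have x0: "x \<noteq> 0" using assms(1,3) by (cases n) auto
  then have xy: "x * inverse x = 1" by simp
  have yn: "inverse x ^ n = 1" using assms(1) by (simp add: power_inverse)
  show "chebL (x + inverse x) n = 2" using chebL_closed_form[OF xy] assms(1) yn by simp
  have "x - inverse x \<noteq> 0"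
    using assms(2) x0 by (auto simp: power2_eq_square field_simps)
  moreover have "chebU (x + inverse x) (n - 1) * (x - inverse x) = 0"
    using chebU_closed_form[OF xy, of "n - 1"] assms(1,3) yn by simp
  ultimately show "chebU (x + inverse x) (n - 1) = 0" by simp
qed

definition y_coeff :: "complex \<Rightarrow> complex \<Rightarrow> nat \<Rightarrow> complex" where
  "y_coeff Q t k = (if k = 0 then 1 else Q ^ k * chebL t k + of_nat k * Q ^ (k - 1) * chebU t (k - 1))"

definition w_coeff :: "complex \<Rightarrow> complex \<Rightarrow> nat \<Rightarrow> complex" where
  "w_coeff Q t k = (if k = 0 then 1 else Q ^ k * chebL t k)"

lemma w_coeff_recurrence:
  "w_coeff Q t (m + 3) + Q\<^sup>2 * w_coeff Q t (m + 1) = Q * t * w_coeff Q t (m + 2)"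
  unfolding w_coeff_def
  by (simp del: chebL.simps add: chebL_Suc_eq_chebU algebra_simps power2_eq_square numeral_3_eq_3 numeral_2_eq_2)

lemma y_coeff_recurrence:
  "y_coeff Q t (m + 3) + Q\<^sup>2 * y_coeff Q t (m + 1) = Q * t * y_coeff Q t (m + 2) + w_coeff Q t (m + 2)"
  unfolding y_coeff_def w_coeff_def
  by (simp del: chebL.simps add: chebL_Suc_eq_chebU algebra_simps power2_eq_square numeral_3_eq_3 numeral_2_eq_2)

lemma sum_lessThan_mult_blocks:
  fixes g :: "nat \<Rightarrow> 'a::comm_monoid_add"
  shows "(\<Sum>p<m * n. g p) = (\<Sum>a<m. \<Sum>k<n. g (a * n + k))"
proof -
  have "(\<Sum>p<m * n. g p) = (\<Sum>a<m. sum g {a * n..<a * n + n})"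
    using sum.nat_group[of g n m] by simp
  also have "\<dots> = (\<Sum>a<m. \<Sum>k<n. g (a * n + k))"
  proof (rule sum.cong[OF refl])
    fix a
    show "sum g {a * n..<a * n + n} = (\<Sum>k<n. g (a * n + k))"
      using sum.shift_bounds_nat_ivl[of g 0 "a * n" n] by (simp add: atLeast0LessThan add.commute)
  qed
  finally show ?thesis .
qed

definition Mblock_I_coeff :: "nat \<Rightarrow> nat \<Rightarrow> nat \<Rightarrow> complex" where
  "Mblock_I_coeff n a b = (if a \<le> n - 2 \<and> b = a + 1 then 1 else if a = n - 1 \<and> b = 0 then 2 else 0)"

definition Mblock_Z_coeff :: "nat \<Rightarrow> nat \<Rightarrow> nat \<Rightarrow> complex" where
  "Mblock_Z_coeff n a b =
     (if 1 \<le> a \<and> a \<le> n - 2 \<and> b + 1 = a then 1 else if a = n - 1 \<and> b = n - 2 then 2 else 0)"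

lemma if_chain_eq_linear_combination:
  fixes X Y :: "'a::comm_ring_1"
  assumes "\<not> (P1 \<and> P2)" "\<not> (P1 \<and> P4)" "\<not> (P3 \<and> P2)" "\<not> (P3 \<and> P4)"
  shows "(if P1 then X else if P2 then Y else if P3 then 2 * X else if P4 then 2 * Y else 0)
         = (if P1 then 1 else if P3 then 2 else 0) * X + (if P2 then 1 else if P4 then 2 else 0) * Y"
  using assms by auto

lemma Mblock_decompose:
  assumes "3 \<le> n"
  shows "Mblock n a b i k = Mblock_I_coeff n a b * Imat i k + Mblock_Z_coeff n a b * Zmat n i k"
  unfolding Mblock_def Mblock_I_coeff_def Mblock_Z_coeff_def
  by (rule if_chain_eq_linear_combination) (use assms in linarith)+

lemma sum_Mblock_I_coeff:
  assumes "3 \<le> n" "b < n"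
  shows "(\<Sum>a<n. f a * Mblock_I_coeff n a b) = (if b = 0 then 2 * f (n - 1) else f (b - 1))"
proof -
  have "(\<Sum>a<n. f a * Mblock_I_coeff n a b)
        = (\<Sum>a<n. if a = (if b = 0 then n - 1 else b - 1) then (if b = 0 then 2 * f a else f a) else 0)"
    by (intro sum.cong refl) (use assms in \<open>auto simp: Mblock_I_coeff_def\<close>)
  also have "\<dots> = (if b = 0 then 2 * f (n - 1) else f (b - 1))"
    using assms by (subst sum.delta) auto
  finally show ?thesis .
qed

lemma sum_Mblock_Z_coeff:
  assumes "3 \<le> n" "b < n"
  shows "(\<Sum>a<n. f a * Mblock_Z_coeff n a b)
         = (if b + 2 < n then f (b + 1) else if b + 2 = n then 2 * f (n - 1) else 0)"
proof -
  have "(\<Sum>a<n. f a * Mblock_Z_coeff n a b)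
        = (\<Sum>a<n. if a = b + 1 then (if b + 2 < n then f a else if b + 2 = n then 2 * f a else 0) else 0)"
    by (intro sum.cong refl) (use assms in \<open>auto simp: Mblock_Z_coeff_def\<close>)
  also have "\<dots> = (if b + 2 < n then f (b + 1) else if b + 2 = n then 2 * f (n - 1) else 0)"
    using assms by (subst sum.delta) auto
  finally show ?thesis .
qed

lemma sum_mult_Mblock_of_Zmat_eigen:
  assumes "3 \<le> n" "a < n" "b < n" "i < n"
    and w: "\<forall>i<n. rowmul n w (Zmat n) i = z * w i"
  shows "(\<Sum>k<n. w k * Mblock n a b k i) = (Mblock_I_coeff n a b + z * Mblock_Z_coeff n a b) * w i"
proof -
  have "(\<Sum>k<n. w k * Mblock n a b k i)
        = Mblock_I_coeff n a b * (\<Sum>k<n. w k * Imat k i) + Mblock_Z_coeff n a b * (\<Sum>k<n. w k * Zmat n k i)"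
    using assms(1-3) by (simp add: Mblock_decompose algebra_simps sum.distrib sum_distrib_left)
  moreover have "(\<Sum>k<n. w k * Imat k i) = w i"
  proof -
    have "(\<Sum>k<n. w k * Imat k i) = (\<Sum>k<n. if k = i then w k else 0)"
      by (intro sum.cong) (auto simp: Imat_def)
    then show ?thesis using \<open>i < n\<close> by simp
  qed
  moreover have "(\<Sum>k<n. w k * Zmat n k i) = z * w i"
    using w \<open>i < n\<close> by (simp add: rowmul_def)
  ultimately show ?thesis by (simp add: algebra_simps)
qed

lemma rowmul_Mmat_block_vector:
  assumes n: "3 \<le> n" and w: "\<forall>i<n. rowmul n w (Zmat n) i = z * w i"
    and v: "\<forall>p<n * n. v p = f (p div n) * w (p mod n)" and c: "c < n * n"
  shows "rowmul (n * n) v (Mmat n) c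
         = (\<Sum>a<n. f a * (Mblock_I_coeff n a (c div n) + z * Mblock_Z_coeff n a (c div n))) * w (c mod n)"
proof -
  have b: "c div n < n" and i: "c mod n < n"
    using c n by (auto simp: less_mult_imp_div_less)
  have "rowmul (n * n) v (Mmat n) c = (\<Sum>a<n. \<Sum>k<n. v (a * n + k) * Mmat n (a * n + k) c)"
    by (simp add: rowmul_def sum_lessThan_mult_blocks)
  also have "\<dots> = (\<Sum>a<n. f a * (\<Sum>k<n. w k * Mblock n a (c div n) k (c mod n)))"
  proof (intro sum.cong refl)
    fix a assume "a \<in> {..<n}"
    then have "a * n + k < n * n" if "k < n" for k
    proof -
      have "a * n + k < Suc a * n" using that by simp
      also have "\<dots> \<le> n * n" using \<open>a \<in> {..<n}\<close> by (intro mult_le_mono1) simp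
      finally show ?thesis .
    qed
    then show "(\<Sum>k<n. v (a * n + k) * Mmat n (a * n + k) c)
               = f a * (\<Sum>k<n. w k * Mblock n a (c div n) k (c mod n))"
      using v by (simp add: sum_distrib_left Mmat_def mult.assoc)
  qed
  also have "\<dots> = (\<Sum>a<n. f a * (Mblock_I_coeff n a (c div n) + z * Mblock_Z_coeff n a (c div n))) * w (c mod n)"
    using sum_mult_Mblock_of_Zmat_eigen[OF n _ b i w] by (simp add: sum_distrib_right mult.assoc)
  finally show ?thesis .
qed

text \<open>
  g k is the coefficient of w in block n - 1 - k, i.e. in y_k; the terms 2 * g 0 come from the blocks
  2I and 2Z in the last block row of M.
\<close>
definition block_action :: "nat \<Rightarrow> complex \<Rightarrow> (nat \<Rightarrow> complex) \<Rightarrow> nat \<Rightarrow> complex" where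
  "block_action n z g k =
     (if k = n - 1 then 2 * g 0 else g (k + 1)) + z * (if k = 0 then 0 else if k = 1 then 2 * g 0 else g (k - 1))"

lemma rowmul_Mmat_reversed_block_vector:
  assumes n: "3 \<le> n" and w: "\<forall>i<n. rowmul n w (Zmat n) i = z * w i"
    and v: "\<forall>p<n * n. v p = g (n - 1 - p div n) * w (p mod n)" and c: "c < n * n"
  shows "rowmul (n * n) v (Mmat n) c = block_action n z g (n - 1 - c div n) * w (c mod n)"
proof -
  define b where "b = c div n"
  have b: "b < n" using c n by (simp add: b_def less_mult_imp_div_less)
  let ?f = "\<lambda>a. g (n - 1 - a)"
  have "rowmul (n * n) v (Mmat n) c
        = (\<Sum>a<n. ?f a * (Mblock_I_coeff n a b + z * Mblock_Z_coeff n a b)) * w (c mod n)"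
    unfolding b_def by (rule rowmul_Mmat_block_vector[OF n w v c])
  also have "(\<Sum>a<n. ?f a * (Mblock_I_coeff n a b + z * Mblock_Z_coeff n a b))
             = (\<Sum>a<n. ?f a * Mblock_I_coeff n a b) + z * (\<Sum>a<n. ?f a * Mblock_Z_coeff n a b)"
    by (simp add: algebra_simps sum.distrib sum_distrib_left)
  also have "\<dots> = block_action n z g (n - 1 - b)"
    using b n by (simp add: sum_Mblock_I_coeff sum_Mblock_Z_coeff block_action_def Suc_diff_Suc) linarith
  finally show ?thesis unfolding b_def .
qed

lemma block_action_of_recurrence:
  assumes n: "3 \<le> n" and k: "k < n"
    and period: "g n = 2 * g 0"
    and init1: "g 1 = s * g 0 + e 0"
    and init2: "g 2 + 2 * z * g 0 = s * g 1 + e 1"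
    and rec: "\<And>m. g (m + 3) + z * g (m + 1) = s * g (m + 2) + e (m + 2)"
  shows "block_action n z g k = s * g k + e k"
proof -
  consider "k = 0" | "k = 1" | "k = n - 1" | "2 \<le> k" "k + 2 \<le> n" using n k by linarith
  then show ?thesis
  proof cases
    case 1
    then show ?thesis using n init1 by (simp add: block_action_def)
  next
    case 2
    moreover have "n - 1 \<noteq> 1" using n by simp
    ultimately show ?thesis using init2 by (simp add: block_action_def algebra_simps numeral_2_eq_2)
  next
    case 3
    have "n - 3 + 3 = n" "n - 3 + 1 = k - 1" "n - 3 + 2 = k" using n 3 by auto
    then have "g n + z * g (k - 1) = s * g k + e k" using rec[of "n - 3"] by simp
    moreover have "k \<noteq> 0" "k \<noteq> 1" using n 3 by auto
    ultimately show ?thesis using 3 period by (simp add: block_action_def)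
  next
    case 4
    have "k - 2 + 3 = k + 1" "k - 2 + 1 = k - 1" "k - 2 + 2 = k" using 4 by auto
    then have "g (k + 1) + z * g (k - 1) = s * g k + e k" using rec[of "k - 2"] by simp
    moreover have "k \<noteq> 0" "k \<noteq> 1" "k \<noteq> n - 1" using 4 by auto
    ultimately show ?thesis by (simp add: block_action_def)
  qed
qed

lemma block_action_w_coeff:
  assumes "3 \<le> n" "k < n" "Q ^ n = 1" "chebL t n = 2"
  shows "block_action n (Q\<^sup>2) (w_coeff Q t) k = Q * t * w_coeff Q t k"
proof -
  have "block_action n (Q\<^sup>2) (w_coeff Q t) k = Q * t * w_coeff Q t k + 0"
  proof (rule block_action_of_recurrence)
    show "w_coeff Q t n = 2 * w_coeff Q t 0" using assms by (simp add: w_coeff_def)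
    show "w_coeff Q t 2 + 2 * Q\<^sup>2 * w_coeff Q t 0 = Q * t * w_coeff Q t 1 + 0"
      by (simp add: w_coeff_def numeral_2_eq_2 power2_eq_square algebra_simps)
  qed (use assms w_coeff_recurrence in \<open>auto simp: w_coeff_def\<close>)
  then show ?thesis by simp
qed

lemma block_action_y_coeff:
  assumes "3 \<le> n" "k < n" "Q ^ n = 1" "chebL t n = 2" "chebU t (n - 1) = 0"
  shows "block_action n (Q\<^sup>2) (y_coeff Q t) k = Q * t * y_coeff Q t k + w_coeff Q t k"
proof (rule block_action_of_recurrence)
  show "y_coeff Q t n = 2 * y_coeff Q t 0" using assms by (simp add: y_coeff_def)
  show "y_coeff Q t 1 = Q * t * y_coeff Q t 0 + w_coeff Q t 0" by (simp add: y_coeff_def w_coeff_def)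
  show "y_coeff Q t 2 + 2 * Q\<^sup>2 * y_coeff Q t 0 = Q * t * y_coeff Q t 1 + w_coeff Q t 1"
    by (simp add: y_coeff_def w_coeff_def numeral_2_eq_2 power2_eq_square algebra_simps)
qed (use assms y_coeff_recurrence in auto)

lemma yblock_eq_y_coeff: "yblock q j r w k i = y_coeff (q ^ r) (q ^ j + inverse (q ^ j)) k * w i"
proof -
  define t where "t = q ^ j + inverse (q ^ j)"
  consider "k = 0" | "k = 1" | "2 \<le> k" by linarith
  then show ?thesis
  proof cases
    case 3
    have "chebU t k - chebU t (k - 2) = chebL t k"
      using chebL_eq_chebU_diff[of t "k - 2"] 3 by (simp add: Suc_diff_Suc numeral_2_eq_2)
    moreover have "q ^ (k * r) = (q ^ r) ^ k" "q ^ ((k - 1) * r) = (q ^ r) ^ (k - 1)"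
      by (simp_all add: mult.commute flip: power_mult)
    ultimately show ?thesis
      using 3 by (simp add: yblock_def y_coeff_def Let_def t_def[symmetric] distrib_right)
  qed (auto simp: yblock_def y_coeff_def algebra_simps)
qed

lemma wvec_eq_w_coeff:
  assumes "p < n * n"
  shows "wvec n q j r w p = w_coeff (q ^ r) (q ^ j + inverse (q ^ j)) (n - 1 - p div n) * w (p mod n)"
proof -
  have "p div n < n" using assms by (simp add: less_mult_imp_div_less)
  then show ?thesis by (auto simp: wvec_def w_coeff_def Let_def power_mult mult.commute)
qed

lemma wvec_last_block:
  assumes "i < n"
  shows "wvec n q j r w ((n - 1) * n + i) = w i"
  using assms by (simp add: wvec_def Let_def)

lemma last_block_index_less:
  fixes i n :: nat
  assumes "i < n"
  shows "(n - 1) * n + i < n * n"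
  using assms by (cases n) auto

theorem mainTheorem17:
  fixes n j r :: nat and q :: complex and w :: "nat \<Rightarrow> complex"
  assumes "n \<ge> 3" and "odd n"
    and "primitive_root n q"
    and "r < n"
    and "1 \<le> j" and "2 * j \<le> n - 1"
    and "\<exists>i<n. w i \<noteq> 0"
    and "\<forall>i<n. rowmul n w (Zmat n) i = q ^ (2 * r) * w i"
  shows "(\<forall>c<n*n. rowmul (n*n) (yvec n q j r w) (Mmat n) c
                    = lam q j r * yvec n q j r w c + wvec n q j r w c)
       \<and> (\<forall>c<n*n. rowmul (n*n) (wvec n q j r w) (Mmat n) c = lam q j r * wvec n q j r w c)
       \<and> (\<exists>c<n*n. wvec n q j r w c \<noteq> 0)"
proof -
  define Q t where "Q = q ^ r" and "t = q ^ j + inverse (q ^ j)"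
  have "q ^ n = 1" and "q ^ (2 * j) \<noteq> 1"
    using assms(1,3,5,6) by (auto simp: primitive_root_def)
  then have "(q ^ j) ^ n = 1" "(q ^ j)\<^sup>2 \<noteq> 1" and Qn: "Q ^ n = 1"
    unfolding Q_def by (metis power_mult mult.commute power_one)+
  then have cheb: "chebL t n = 2" "chebU t (n - 1) = 0"
    using cheb_at_root_of_unity[of "q ^ j" n] assms(1) by (simp_all add: t_def)
  have Zw: "\<forall>i<n. rowmul n w (Zmat n) i = Q\<^sup>2 * w i"
    using assms(8) by (simp add: Q_def mult.commute flip: power_mult)
  have y: "\<forall>p<n * n. yvec n q j r w p = y_coeff Q t (n - 1 - p div n) * w (p mod n)"
    and wv: "\<forall>p<n * n. wvec n q j r w p = w_coeff Q t (n - 1 - p div n) * w (p mod n)"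
    by (simp_all add: yvec_def yblock_eq_y_coeff wvec_eq_w_coeff Q_def t_def)
  have k: "n - 1 - c div n < n" for c using assms(1) by simp
  obtain i where "i < n" "w i \<noteq> 0" using assms(7) by blast
  then have "\<exists>c<n*n. wvec n q j r w c \<noteq> 0"
    using last_block_index_less wvec_last_block by metis
  then show ?thesis
    using rowmul_Mmat_reversed_block_vector[OF assms(1) Zw y] rowmul_Mmat_reversed_block_vector[OF assms(1) Zw wv]
      block_action_y_coeff[OF assms(1) k Qn cheb] block_action_w_coeff[OF assms(1) k Qn cheb(1)] y wv
    by (simp add: lam_def Q_def t_def algebra_simps)
qed

end
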